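(* Let $|\varphi_0\rangle,|\varphi_1\rangle,|\varphi_2\rangle,|\varphi_3\rangle,|\varphi_4\rangle$ be vectors in a complex Hilbert space, each of norm at most $1$, and let $\epsilon\ge0$ with $\big|\||\varphi_0\rangle\|-1\big|\le\epsilon$, $\big|\||\varphi_4\rangle\|-1\big|\le\epsilon$ and $\||\varphi_0\rangle+|\varphi_4\rangle\|\le\epsilon$. Then $$\||\varphi_0\rangle+|\varphi_1\rangle\|^2+\||\varphi_1\rangle+|\varphi_2\rangle\|^2+\||\varphi_2\rangle+|\varphi_3\rangle\|^2+\||\varphi_3\rangle+|\varphi_4\rangle\|^2\le16\cos^2(\pi/8)+6\epsilon .$$
   Context: Norms are Euclidean norms on a complex inner product space. *)

theory Defs
  imports "HOL-Analysis.Analysis"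
begin

end

theory Submission
  imports Defs
begin

text \<open>Since \<open>\<phi>\<^sub>4 \<approx> -\<phi>\<^sub>0\<close>, the last term is close to \<open>\<parallel>\<phi>\<^sub>3 - \<phi>\<^sub>0\<parallel>\<^sup>2\<close>, which closes the four
  vectors into a cycle with one sign flip. Expanding the squares, the cyclic sum is
  \<open>2S + 2B\<close> with \<open>S\<close> the sum of the squared norms and \<open>B\<close> the signed sum of the four
  inner products; two squares \<open>\<parallel>a - \<surd>2 b + c\<parallel>\<^sup>2 + \<parallel>c - \<surd>2 d - a\<parallel>\<^sup>2 \<ge> 0\<close> give
  \<open>\<surd>2 B \<le> S\<close>, the Tsirelson-type bound. With \<open>S \<le> 4\<close> this is
  \<open>8 + 4\<surd>2 = 16 cos\<^sup>2(\<pi>/8)\<close>, and replacing \<open>-\<phi>\<^sub>0\<close> by \<open>\<phi>\<^sub>4\<close> costs at most \<open>6\<epsilon>\<close>.\<close>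

lemma sixteen_cos_pi_div_8_squared: "16 * (cos (pi / 8))\<^sup>2 = 8 + 4 * sqrt 2"
proof -
  have "cos (pi / 4) = 2 * (cos (pi / 8))\<^sup>2 - 1"
    using cos_double_cos[of "pi / 8"] by simp
  then show ?thesis
    using cos_45 by simp
qed

lemma sqrt2_signed_cycle_inner_le:
  fixes a b c d :: "'a::real_inner"
  shows "sqrt 2 * (inner a b + inner b c + inner c d - inner d a)
           \<le> (norm a)\<^sup>2 + (norm b)\<^sup>2 + (norm c)\<^sup>2 + (norm d)\<^sup>2"
proof -
  have "(norm (a - sqrt 2 *\<^sub>R b + c))\<^sup>2 + (norm (c - sqrt 2 *\<^sub>R d - a))\<^sup>2
          = 2 * ((norm a)\<^sup>2 + (norm c)\<^sup>2) + sqrt 2 * sqrt 2 * ((norm b)\<^sup>2 + (norm d)\<^sup>2)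
            - 2 * sqrt 2 * (inner a b + inner b c + inner c d - inner d a)"
    by (simp add: power2_norm_eq_inner inner_add_left inner_add_right inner_diff_left
        inner_diff_right inner_commute algebra_simps)
  moreover have "0 \<le> (norm (a - sqrt 2 *\<^sub>R b + c))\<^sup>2 + (norm (c - sqrt 2 *\<^sub>R d - a))\<^sup>2"
    by simp
  ultimately have "0 \<le> 2 * ((norm a)\<^sup>2 + (norm c)\<^sup>2) + sqrt 2 * sqrt 2 * ((norm b)\<^sup>2 + (norm d)\<^sup>2)
                     - 2 * sqrt 2 * (inner a b + inner b c + inner c d - inner d a)"
    by simp
  then show ?thesis
    by simp
qed

lemma signed_cycle_norm_sq_le:
  fixes a b c d :: "'a::real_inner"
  shows "(norm (a + b))\<^sup>2 + (norm (b + c))\<^sup>2 + (norm (c + d))\<^sup>2 + (norm (d - a))\<^sup>2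
           \<le> (2 + sqrt 2) * ((norm a)\<^sup>2 + (norm b)\<^sup>2 + (norm c)\<^sup>2 + (norm d)\<^sup>2)"
proof -
  have "(norm (a + b))\<^sup>2 + (norm (b + c))\<^sup>2 + (norm (c + d))\<^sup>2 + (norm (d - a))\<^sup>2
          = 2 * ((norm a)\<^sup>2 + (norm b)\<^sup>2 + (norm c)\<^sup>2 + (norm d)\<^sup>2)
            + 2 * (inner a b + inner b c + inner c d - inner d a)"
    by (simp add: power2_norm_eq_inner inner_add_left inner_add_right inner_diff_left
        inner_diff_right inner_commute)
  moreover have "2 * (inner a b + inner b c + inner c d - inner d a)
                   \<le> sqrt 2 * ((norm a)\<^sup>2 + (norm b)\<^sup>2 + (norm c)\<^sup>2 + (norm d)\<^sup>2)"
    using mult_left_mono[OF sqrt2_signed_cycle_inner_le[of a b c d], of "sqrt 2"]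
    by (simp add: mult.assoc[symmetric])
  ultimately show ?thesis
    by (simp add: distrib_right)
qed

lemma signed_cycle_norm_sq_le_unit_ball:
  fixes a b c d :: "'a::real_inner"
  assumes "norm a \<le> 1" "norm b \<le> 1" "norm c \<le> 1" "norm d \<le> 1"
  shows "(norm (a + b))\<^sup>2 + (norm (b + c))\<^sup>2 + (norm (c + d))\<^sup>2 + (norm (d - a))\<^sup>2
           \<le> 8 + 4 * sqrt 2"
proof -
  have "(norm a)\<^sup>2 + (norm b)\<^sup>2 + (norm c)\<^sup>2 + (norm d)\<^sup>2 \<le> 4"
    using assms power_le_one[OF norm_ge_zero, of _ 2] by (smt (verit))
  then have "(2 + sqrt 2) * ((norm a)\<^sup>2 + (norm b)\<^sup>2 + (norm c)\<^sup>2 + (norm d)\<^sup>2)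
               \<le> (2 + sqrt 2) * 4"
    by (intro mult_left_mono) auto
  then show ?thesis
    using signed_cycle_norm_sq_le[of a b c d] by simp
qed

lemma norm_add_sq_le_norm_diff_sq:
  fixes x y z :: "'a::real_normed_vector"
  assumes "norm x \<le> 1" "norm y \<le> 1" "norm z \<le> 1"
    and "norm (y + z) \<le> \<epsilon>"
  shows "(norm (x + z))\<^sup>2 \<le> (norm (x - y))\<^sup>2 + 6 * \<epsilon>"
proof (cases "\<epsilon> \<ge> 2")
  case True
  have "norm (x + z) \<le> 2"
    using norm_triangle_ineq[of x z] assms by linarith
  then have "(norm (x + z))\<^sup>2 \<le> 4"
    using power_mono[of "norm (x + z)" 2 2] by simp
  with True show ?thesis
    using zero_le_power2[of "norm (x - y)"] by linarith
next
  case False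
  define u where "u = norm (x - y)"
  have u: "0 \<le> u" "u \<le> 2"
    using norm_triangle_ineq4[of x y] assms unfolding u_def by auto
  have "\<epsilon> \<ge> 0"
    using assms(4) norm_ge_zero order_trans by blast
  have "norm (x + z) \<le> u + \<epsilon>"
    using norm_triangle_ineq[of "x - y" "y + z"] assms(4) unfolding u_def by simp
  then have "(norm (x + z))\<^sup>2 \<le> (u + \<epsilon>)\<^sup>2"
    by (intro power_mono) auto
  also have "\<dots> = u\<^sup>2 + 2 * u * \<epsilon> + \<epsilon> * \<epsilon>"
    by (simp add: power2_eq_square algebra_simps)
  also have "\<dots> \<le> u\<^sup>2 + 6 * \<epsilon>"
    using u \<open>\<epsilon> \<ge> 0\<close> False mult_right_mono[of u 2 \<epsilon>] mult_right_mono[of \<epsilon> 2 \<epsilon>]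
    by linarith
  finally show ?thesis
    unfolding u_def .
qed

theorem corollaryE5:
  fixes \<phi>0 \<phi>1 \<phi>2 \<phi>3 \<phi>4 :: "'a :: {real_inner, complete_space}"
    and \<epsilon> :: real
  assumes "norm \<phi>0 \<le> 1" "norm \<phi>1 \<le> 1" "norm \<phi>2 \<le> 1" "norm \<phi>3 \<le> 1" "norm \<phi>4 \<le> 1"
    and "\<epsilon> \<ge> 0"
    and "\<bar>norm \<phi>0 - 1\<bar> \<le> \<epsilon>" "\<bar>norm \<phi>4 - 1\<bar> \<le> \<epsilon>"
    and "norm (\<phi>0 + \<phi>4) \<le> \<epsilon>"
  shows "(norm (\<phi>0 + \<phi>1))\<^sup>2 + (norm (\<phi>1 + \<phi>2))\<^sup>2 + (norm (\<phi>2 + \<phi>3))\<^sup>2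
           + (norm (\<phi>3 + \<phi>4))\<^sup>2 \<le> 16 * (cos (pi / 8))\<^sup>2 + 6 * \<epsilon>"
proof -
  have "(norm (\<phi>0 + \<phi>1))\<^sup>2 + (norm (\<phi>1 + \<phi>2))\<^sup>2 + (norm (\<phi>2 + \<phi>3))\<^sup>2
          + (norm (\<phi>3 - \<phi>0))\<^sup>2 \<le> 8 + 4 * sqrt 2"
    using signed_cycle_norm_sq_le_unit_ball assms(1-4) .
  moreover have "(norm (\<phi>3 + \<phi>4))\<^sup>2 \<le> (norm (\<phi>3 - \<phi>0))\<^sup>2 + 6 * \<epsilon>"
    using norm_add_sq_le_norm_diff_sq assms(4,1,5,9) .
  ultimately show ?thesis
    unfolding sixteen_cos_pi_div_8_squared by linarith
qed

end
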